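(* Let $l=\sum_{i=4}^8 m_ie_i$ with $m_i\in\mathbb Z$ and $\sum_{i=4}^8m_i$ even (these are exactly the vectors of $E_8$ orthogonal to $L_3=\langle e_2+e_1,e_3-e_2,e_2-e_1\rangle_\mathbb Z\cong A_3$). Then $l$ is orthogonal to exactly $12$ roots of $E_8$ if and only if (i) $m_j\ne0$ for every $j$; (ii) $m_i\ne\pm m_j$ for all $4\le i<j\le 8$; (iii) $\sum_{i=4}^8\pm m_i\ne0$ for every choice of signs. Moreover, $l$ is orthogonal to exactly $14$ roots of $E_8$ if (i) and (iii) hold and there is exactly one pair $4\le i<j\le8$ with $m_i=\pm m_j$.
   Context: $e_1,\dots,e_8$ is an orthonormal basis of $\mathbb R^8$ and $E_8=\{x\in\mathbb Z^8\cup(\mathbb Z+\tfrac12)^8\mid \sum_i x_i\in2\mathbb Z\}$; its roots (vectors of square $2$) are the $112$ vectors $\pm e_i\pm e_j$ ($i<j$) and the $128$ vectors $\frac12\sum_{i=1}^8(-1)^{\nu_i}e_i$ with $\sum\nu_i$ even. *)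

theory Defs
  imports Complex_Main
begin

text \<open>Vectors of R^8 are represented as functions nat => real, with coordinates
  indexed by 1..8 (coordinate i is the coefficient of e_i) and value 0 outside {1..8}.\<close>

definition E8 :: "(nat \<Rightarrow> real) set" where
  "E8 = {x. (\<forall>i. i \<notin> {1..8} \<longrightarrow> x i = 0)
          \<and> ((\<forall>i\<in>{1..8}. x i \<in> \<int>) \<or> (\<forall>i\<in>{1..8}. x i - 1/2 \<in> \<int>))
          \<and> (\<exists>k::int. (\<Sum>i=1..8. x i) = 2 * of_int k)}"

definition inner8 :: "(nat \<Rightarrow> real) \<Rightarrow> (nat \<Rightarrow> real) \<Rightarrow> real" where
  "inner8 x y = (\<Sum>i=1..8. x i * y i)"

definition E8_roots :: "(nat \<Rightarrow> real) set" where
  "E8_roots = {x \<in> E8. inner8 x x = 2}"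

end

theory Submission
  imports Defs
begin

(* Every root of E8 is either \<plusminus>e_a \<plusminus> e_b or has all coordinates \<plusminus>1/2. As l lives on the
  coordinates 4..8, the 12 roots \<plusminus>e_a \<plusminus> e_b with a, b \<le> 3 are always orthogonal to l.
  A root \<plusminus>e_a \<plusminus> e_b with a \<le> 3 < b is orthogonal to l iff m_b = 0, and a half-integral
  root is orthogonal iff one of the signed sums of the m_i vanishes (every sign pattern on
  the coordinates 4..8 extends to a root by choosing the sign of the third coordinate).
  Finally \<plusminus>e_a \<plusminus> e_b with 4 \<le> a < b is orthogonal iff m_a = \<plusminus>m_b, and each such pair
  contributes exactly two roots. So under (i) and (iii) there are 12 + 2p orthogonal roots,
  where p is the number of pairs a < b with m_a = \<plusminus>m_b. *)

definition pair_root :: "nat \<Rightarrow> nat \<Rightarrow> real \<Rightarrow> real \<Rightarrow> nat \<Rightarrow> real" where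
  "pair_root a b sa sb = (\<lambda>i. if i = a then sa else if i = b then sb else 0)"

lemma sum_mult_pair_root:
  assumes "finite A" "a \<in> A" "b \<in> A" "a \<noteq> b"
  shows "(\<Sum>i\<in>A. f i * pair_root a b sa sb i) = f a * sa + f b * sb"
proof -
  have "(\<Sum>i\<in>A. f i * pair_root a b sa sb i)
      = (\<Sum>i\<in>A. (if i = a then f a * sa else 0) + (if i = b then f b * sb else 0))"
    using assms(4) by (intro sum.cong) (auto simp: pair_root_def)
  then show ?thesis using assms by (simp add: sum.distrib)
qed

lemma inner8_pair_root:
  assumes "a \<in> {1..8}" "b \<in> {1..8}" "a \<noteq> b"
  shows "inner8 x (pair_root a b sa sb) = x a * sa + x b * sb"
  unfolding inner8_def using assms by (simp add: sum_mult_pair_root)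

lemma pair_root_in_E8_roots:
  assumes "a \<in> {1..8}" "b \<in> {1..8}" "a \<noteq> b" "sa \<in> {1, -1}" "sb \<in> {1, -1}"
  shows "pair_root a b sa sb \<in> E8_roots"
proof -
  have "(\<Sum>i=1..8. pair_root a b sa sb i) = sa + sb"
    using sum_mult_pair_root[of "{1..8}" a b "\<lambda>_. 1"] assms by simp
  moreover have "\<exists>k::int. sa + sb = 2 * of_int k"
    using assms(4,5) by (auto intro: exI[of _ 0] exI[of _ 1] exI[of _ "-1"])
  moreover have "inner8 (pair_root a b sa sb) (pair_root a b sa sb) = 2"
    using assms by (simp add: inner8_pair_root) (auto simp: pair_root_def)
  ultimately show ?thesis
    using assms by (auto simp: E8_roots_def E8_def pair_root_def)
qed

lemma support_pair_root:
  assumes "a \<noteq> b" "sa \<noteq> 0" "sb \<noteq> 0"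
  shows "{i. pair_root a b sa sb i \<noteq> 0} = {a, b}"
  using assms by (auto simp: pair_root_def)

lemma pair_root_inject:
  assumes "a < b" "a' < b'" "sa \<noteq> 0" "sb \<noteq> 0" "sa' \<noteq> 0" "sb' \<noteq> 0"
    and eq: "pair_root a b sa sb = pair_root a' b' sa' sb'"
  shows "a = a' \<and> b = b' \<and> sa = sa' \<and> sb = sb'"
proof -
  have "{a, b} = {a', b'}"
    using support_pair_root[of a b sa sb] support_pair_root[of a' b' sa' sb'] assms by auto
  then have "a = a'" "b = b'"
    using \<open>a < b\<close> \<open>a' < b'\<close> by (auto simp: doubleton_eq_iff)
  moreover have "sa = sa'" "sb = sb'"
    using fun_cong[OF eq, of a] fun_cong[OF eq, of b] \<open>a < b\<close> calculation
    by (simp_all add: pair_root_def)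
  ultimately show ?thesis by blast
qed

lemma inj_on_pair_root:
  "inj_on (\<lambda>((a, b), (sa, sb)). pair_root a b sa sb) ({(a, b). a < b} \<times> ({1, -1} \<times> {1, -1}))"
  by (rule inj_onI) (clarify, drule pair_root_inject; auto)

definition pair_roots :: "((nat \<times> nat) \<times> (real \<times> real)) set \<Rightarrow> (nat \<Rightarrow> real) set" where
  "pair_roots X = (\<lambda>((a, b), (sa, sb)). pair_root a b sa sb) ` X"

lemma card_pair_roots:
  assumes "X \<subseteq> {(a, b). a < b} \<times> ({1, -1} \<times> {1, -1})"
  shows "card (pair_roots X) = card X"
  unfolding pair_roots_def using inj_on_subset[OF inj_on_pair_root assms] by (rule card_image)

lemma Ints_square_le_2:
  fixes x :: real
  assumes "x \<in> \<int>" "x * x \<le> 2"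
  shows "x \<in> {-1, 0, 1}"
proof -
  obtain k where k: "x = of_int k" using assms(1) Ints_cases by blast
  have "k * k \<le> 2" using assms(2) unfolding k by (metis of_int_le_iff of_int_mult of_int_numeral)
  have "\<not> 2 \<le> \<bar>k\<bar>"
  proof
    assume "2 \<le> \<bar>k\<bar>"
    then have "2 * 2 \<le> \<bar>k\<bar> * \<bar>k\<bar>" by (intro mult_mono) auto
    then show False using \<open>k * k \<le> 2\<close> by (simp add: abs_mult_self_eq)
  qed
  then have "k \<in> {-1, 0, 1}" by auto
  then show ?thesis using k by auto
qed

lemma integral_root_is_pair_root:
  assumes "r \<in> E8_roots" "\<forall>i\<in>{1..8}. r i \<in> \<int>"
  obtains a b sa sb where "1 \<le> a" "a < b" "b \<le> 8" "sa \<in> {1, -1}" "sb \<in> {1, -1}"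
    "r = pair_root a b sa sb"
proof -
  have out: "\<forall>i. i \<notin> {1..8} \<longrightarrow> r i = 0" and norm: "(\<Sum>i=1..8. r i * r i) = 2"
    using assms(1) by (auto simp: E8_roots_def E8_def inner8_def)
  have coord: "r i \<in> {-1, 0, 1}" if "i \<in> {1..8}" for i
  proof (rule Ints_square_le_2)
    show "r i \<in> \<int>" using assms(2) that by blast
    have "r i * r i \<le> (\<Sum>i=1..8. r i * r i)" by (rule member_le_sum) (use that in auto)
    then show "r i * r i \<le> 2" using norm by simp
  qed
  define S where "S = {i \<in> {1..8}. r i \<noteq> 0}"
  have "(\<Sum>i=1..8. r i * r i) = (\<Sum>i=1..8. if r i \<noteq> 0 then 1 else 0)"
  proof (rule sum.cong)
    show "r i * r i = (if r i \<noteq> 0 then 1 else 0)" if "i \<in> {1..8}" for i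
      using coord[OF that] by auto
  qed simp
  also have "\<dots> = real (card S)"
    unfolding S_def by (simp add: sum.If_cases Int_def)
  finally have "card S = 2" using norm by simp
  then obtain a b where "a < b" and S: "S = {a, b}"
    by (auto simp: card_2_iff neq_iff insert_commute)
  have "a \<in> S" "b \<in> S" using S by auto
  then have "1 \<le> a" "b \<le> 8" "r a \<in> {1, -1}" "r b \<in> {1, -1}"
    using coord unfolding S_def by auto
  moreover have "r i = 0" if "i \<noteq> a" "i \<noteq> b" for i
    using that out S unfolding S_def by auto
  then have "r = pair_root a b (r a) (r b)"
    by (auto simp: pair_root_def)
  ultimately show thesis using that[of a b "r a" "r b"] \<open>a < b\<close> by blast
qed

lemma half_integral_root_coordinates:
  assumes "r \<in> E8_roots" "\<forall>i\<in>{1..8}. r i - 1/2 \<in> \<int>"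
  shows "\<forall>i\<in>{1..8}. r i \<in> {1/2, -1/2}"
proof -
  have excess_nonneg: "r i * r i - 1/4 \<ge> 0" if "i \<in> {1..8}" for i
  proof -
    have "r i - 1/2 \<in> \<int>" using assms(2) that by blast
    then obtain k where "r i - 1/2 = of_int k" by (elim Ints_cases)
    then have "r i = of_int k + 1/2" by simp
    moreover have "real_of_int k * (of_int k + 1) \<ge> 0"
      by (cases "k \<ge> 0") (auto simp: mult_nonneg_nonneg mult_nonpos_nonpos)
    ultimately show ?thesis by (simp add: algebra_simps)
  qed
  have "(\<Sum>i=1..8. r i * r i - 1/4) = 0"
    using assms(1) by (simp add: E8_roots_def inner8_def sum_subtractf)
  then have "\<forall>i\<in>{1..8}. r i * r i - 1/4 = 0"
    using excess_nonneg sum_nonneg_eq_0_iff[of "{1..8}" "\<lambda>i. r i * r i - 1/4"] by auto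
  moreover have "x * x - 1/4 = 0 \<Longrightarrow> x \<in> {1/2, -1/2}" for x :: real
    using mult_eq_0_iff[of "x - 1/2" "x + 1/2"] by (auto simp: algebra_simps)
  ultimately show ?thesis by blast
qed

lemma E8_roots_cases:
  assumes "r \<in> E8_roots"
  obtains a b sa sb where "1 \<le> a" "a < b" "b \<le> 8" "sa \<in> {1, -1}" "sb \<in> {1, -1}"
    "r = pair_root a b sa sb"
  | "\<forall>i\<in>{1..8}. r i \<in> {1/2, -1/2}"
proof -
  have "(\<forall>i\<in>{1..8}. r i \<in> \<int>) \<or> (\<forall>i\<in>{1..8}. r i - 1/2 \<in> \<int>)"
    using assms by (simp add: E8_roots_def E8_def)
  then show thesis
    using that integral_root_is_pair_root[OF assms] half_integral_root_coordinates[OF assms]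
    by blast
qed

lemma half_vector_in_E8_roots:
  assumes "\<forall>i. i \<notin> {1..8} \<longrightarrow> w i = 0" "\<forall>i\<in>{1..8}. w i \<in> {1/2, -1/2}"
    and "\<exists>k::int. (\<Sum>i=1..8. w i) = 2 * of_int k"
  shows "w \<in> E8_roots"
proof -
  have half: "x - 1/2 \<in> \<int> \<and> x * x = 1/4" if "x \<in> {1/2, -1/2}" for x :: real
    using that by (elim insertE emptyE; hypsubst; simp)
  have "inner8 w w = (\<Sum>i::nat=1..8. 1/4)"
    unfolding inner8_def using assms(2) half by (intro sum.cong) auto
  then show ?thesis
    using assms half by (simp add: E8_roots_def E8_def)
qed

lemma exists_half_root:
  fixes s :: "nat \<Rightarrow> int"
  assumes s: "\<forall>i\<in>{4..8}. s i = 1 \<or> s i = -1"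
  obtains w where "w \<in> E8_roots" "\<forall>i\<in>{4..8}. w i = of_int (s i) / 2"
proof -
  define T where "T = (\<Sum>i=4..8. s i)"
  have "{i\<in>{4..8::nat}. odd (s i)} = {4..8}"
    using s by auto
  then have "odd T"
    unfolding T_def by (subst even_sum_iff) auto
  \<comment> \<open>coordinates 1 and 2 are 1/2, the sign t of coordinate 3 makes the sum (2 + t + T)/2 even\<close>
  define t :: int where "t = (if 4 dvd (T + 3) then 1 else -1)"
  have "4 dvd (2 + t + T)"
    using \<open>odd T\<close> unfolding t_def by presburger
  then obtain k where k: "2 + t + T = 4 * k" by (elim dvdE)
  define w :: "nat \<Rightarrow> real" where "w i = (if i \<in> {4..8} then of_int (s i) / 2
      else if i \<in> {1, 2} then 1/2 else if i = 3 then of_int t / 2 else 0)" for i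
  have "(\<Sum>i=1..8. w i) = of_int (2 + t + T) / 2"
    unfolding w_def T_def by (simp add: sum.atLeast_Suc_atMost numeral_eq_Suc field_simps)
  then have "(\<Sum>i=1..8. w i) = 2 * of_int k"
    unfolding k by simp
  moreover have "\<forall>i\<in>{1..8}. w i \<in> {1/2, -1/2}"
    using s unfolding w_def t_def by auto
  ultimately have "w \<in> E8_roots"
    by (intro half_vector_in_E8_roots) (auto simp: w_def)
  then show thesis
    using that[of w] by (simp add: w_def)
qed

definition coeff_vector :: "(nat \<Rightarrow> int) \<Rightarrow> nat \<Rightarrow> real" where
  "coeff_vector m = (\<lambda>i. if i \<in> {4..8} then real_of_int (m i) else 0)"

definition orth_roots :: "(nat \<Rightarrow> real) \<Rightarrow> (nat \<Rightarrow> real) set" where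
  "orth_roots l = {r \<in> E8_roots. inner8 l r = 0}"

definition A3_roots :: "(nat \<Rightarrow> real) set" where
  "A3_roots = {r \<in> E8_roots. \<forall>i\<in>{4..8}. r i = 0}"

definition signed_sums_nonzero :: "(nat \<Rightarrow> int) \<Rightarrow> bool" where
  "signed_sums_nonzero m \<longleftrightarrow> (\<forall>s::nat \<Rightarrow> int. (\<forall>i\<in>{4..8}. s i = 1 \<or> s i = -1)
     \<longrightarrow> (\<Sum>i=4..8. s i * m i) \<noteq> 0)"

definition equal_abs_pairs :: "(nat \<Rightarrow> int) \<Rightarrow> (nat \<times> nat) set" where
  "equal_abs_pairs m = {(i, j). 4 \<le> i \<and> i < j \<and> j \<le> 8 \<and> (m i = m j \<or> m i = - m j)}"

definition sign_solutions :: "real \<Rightarrow> real \<Rightarrow> (real \<times> real) set" where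
  "sign_solutions x y = {(sa, sb) \<in> {1, -1} \<times> {1, -1}. x * sa + y * sb = 0}"

lemma inner8_coeff_vector: "inner8 (coeff_vector m) r = (\<Sum>i=4..8. of_int (m i) * r i)"
proof -
  have "inner8 (coeff_vector m) r = (\<Sum>i=1..8. if i \<in> {4..8} then of_int (m i) * r i else 0)"
    unfolding inner8_def coeff_vector_def by (intro sum.cong) auto
  also have "\<dots> = (\<Sum>i\<in>{1..8} \<inter> {4..8}. of_int (m i) * r i)"
    by (rule sum.inter_restrict[symmetric]) simp
  also have "{1..8} \<inter> {4..8} = {4..8::nat}" by auto
  finally show ?thesis .
qed

lemma A3_roots_eq: "A3_roots = pair_roots ({(a, b). 1 \<le> a \<and> a < b \<and> b \<le> 3} \<times> ({1, -1} \<times> {1, -1}))"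
proof
  show "A3_roots \<subseteq> pair_roots ({(a, b). 1 \<le> a \<and> a < b \<and> b \<le> 3} \<times> ({1, -1} \<times> {1, -1}))"
  proof
    fix r assume "r \<in> A3_roots"
    then have root: "r \<in> E8_roots" and zero: "\<forall>i\<in>{4..8}. r i = 0"
      by (auto simp: A3_roots_def)
    from root show "r \<in> pair_roots ({(a, b). 1 \<le> a \<and> a < b \<and> b \<le> 3} \<times> ({1, -1} \<times> {1, -1}))"
    proof (cases rule: E8_roots_cases)
      case (1 a b sa sb)
      then have "r b \<noteq> 0" by (auto simp: pair_root_def)
      then have "b \<notin> {4..8}" using zero by blast
      then have "b \<le> 3" using \<open>b \<le> 8\<close> by simp
      with 1 show ?thesis
        unfolding pair_roots_def by (intro image_eqI[where x = "((a, b), (sa, sb))"]) auto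
    next
      case 2
      then have "r 4 \<in> {1/2, -1/2}" by simp
      then show ?thesis using zero by simp
    qed
  qed
next
  have "pair_root a b sa sb \<in> A3_roots"
    if "1 \<le> a" "a < b" "b \<le> 3" "sa \<in> {1, -1}" "sb \<in> {1, -1}" for a b sa sb
    using that pair_root_in_E8_roots[of a b sa sb] by (simp add: A3_roots_def pair_root_def)
  then show "pair_roots ({(a, b). 1 \<le> a \<and> a < b \<and> b \<le> 3} \<times> ({1, -1} \<times> {1, -1})) \<subseteq> A3_roots"
    unfolding pair_roots_def image_subset_iff by clarify
qed

lemma card_A3_roots: "card A3_roots = 12"
proof -
  have "{(a, b). 1 \<le> a \<and> a < b \<and> b \<le> (3::nat)} = {(1, 2), (1, 3), (2, 3)}" by auto
  then show ?thesis
    unfolding A3_roots_eq by (subst card_pair_roots) (auto simp: card_cartesian_product)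
qed

lemma A3_roots_subset_orth_roots: "A3_roots \<subseteq> orth_roots (coeff_vector m)"
  by (auto simp: A3_roots_def orth_roots_def inner8_coeff_vector)

lemma card_orth_roots_eq_12_iff:
  "card (orth_roots (coeff_vector m)) = 12 \<longleftrightarrow> orth_roots (coeff_vector m) \<subseteq> A3_roots"
proof
  assume card: "card (orth_roots (coeff_vector m)) = 12"
  then have "finite (orth_roots (coeff_vector m))" by (intro card_ge_0_finite) simp
  then have "A3_roots = orth_roots (coeff_vector m)"
    using card card_A3_roots A3_roots_subset_orth_roots by (intro card_subset_eq) auto
  then show "orth_roots (coeff_vector m) \<subseteq> A3_roots" by simp
next
  assume "orth_roots (coeff_vector m) \<subseteq> A3_roots"
  then show "card (orth_roots (coeff_vector m)) = 12"
    using A3_roots_subset_orth_roots card_A3_roots by (metis subset_antisym)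
qed

lemma inner8_coeff_vector_half:
  assumes "\<forall>i\<in>{4..8}. r i = of_int (s i) / 2"
  shows "inner8 (coeff_vector m) r = of_int (\<Sum>i=4..8. s i * m i) / 2"
proof -
  have "inner8 (coeff_vector m) r = (\<Sum>i=4..8. of_int (s i * m i) / 2)"
    unfolding inner8_coeff_vector using assms by (intro sum.cong) auto
  then show ?thesis by (simp only: of_int_sum sum_divide_distrib)
qed

lemma orth_root_cases:
  assumes nonzero: "\<forall>j\<in>{4..8}. m j \<noteq> 0" and sums: "signed_sums_nonzero m"
    and r: "r \<in> orth_roots (coeff_vector m)"
  obtains "r \<in> A3_roots"
  | a b sa sb where "4 \<le> a" "a < b" "b \<le> 8" "(sa, sb) \<in> sign_solutions (m a) (m b)"
      "r = pair_root a b sa sb"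
proof -
  have root: "r \<in> E8_roots"
    using r by (simp add: orth_roots_def)
  from root show thesis
  proof (cases rule: E8_roots_cases)
    case pair: (1 a b sa sb)
    have pair_orth: "coeff_vector m a * sa + coeff_vector m b * sb = 0"
      using r pair by (simp add: orth_roots_def inner8_pair_root)
    consider "b \<le> 3" | "a \<le> 3" "4 \<le> b" | "4 \<le> a" using pair by linarith
    then show thesis
    proof cases
      case 1
      then have "r \<in> A3_roots"
        using root pair by (auto simp: A3_roots_def pair_root_def)
      then show thesis by (rule that(1))
    next
      case 2
      then have "of_int (m b) * sb = 0"
        using pair pair_orth by (simp add: coeff_vector_def)
      then show thesis
        using nonzero pair \<open>4 \<le> b\<close> by auto
    next
      case 3
      then have "(sa, sb) \<in> sign_solutions (m a) (m b)"
        using pair pair_orth by (auto simp: coeff_vector_def sign_solutions_def)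
      then show thesis
        using that(2) pair \<open>4 \<le> a\<close> by blast
    qed
  next
    case 2
    define s :: "nat \<Rightarrow> int" where "s i = (if r i = 1/2 then 1 else -1)" for i
    have "\<forall>i\<in>{4..8}. s i = 1 \<or> s i = -1" by (simp add: s_def)
    then have "(\<Sum>i=4..8. s i * m i) \<noteq> 0"
      using sums by (simp add: signed_sums_nonzero_def)
    moreover have "inner8 (coeff_vector m) r = of_int (\<Sum>i=4..8. s i * m i) / 2"
      using 2 by (intro inner8_coeff_vector_half) (auto simp: s_def)
    ultimately show thesis
      using r by (simp add: orth_roots_def del: of_int_sum)
  qed
qed

lemma sign_solutions_imp_equal_abs: "(sa, sb) \<in> sign_solutions x y \<Longrightarrow> x = y \<or> x = - y"
  by (auto simp: sign_solutions_def)

lemma finite_sign_solutions: "finite (sign_solutions x y)"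
  by (rule finite_subset[of _ "{1, -1} \<times> {1, -1}"]) (auto simp: sign_solutions_def)

lemma card_sign_solutions:
  assumes "y \<noteq> 0" "x = y \<or> x = - y"
  shows "card (sign_solutions x y) = 2"
proof -
  have "sign_solutions x y = (if x = y then {(1, -1), (-1, 1)} else {(1, 1), (-1, -1)})"
    using assms by (auto simp: sign_solutions_def)
  then show ?thesis by simp
qed

lemma finite_equal_abs_pairs: "finite (equal_abs_pairs m)"
  by (rule finite_subset[of _ "{4..8} \<times> {4..8}"]) (auto simp: equal_abs_pairs_def)

lemma orth_roots_eq:
  assumes nonzero: "\<forall>j\<in>{4..8}. m j \<noteq> 0" and sums: "signed_sums_nonzero m"
  shows "orth_roots (coeff_vector m) = A3_roots \<union>
    pair_roots (Sigma (equal_abs_pairs m) (\<lambda>(a, b). sign_solutions (m a) (m b)))"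
    (is "_ = _ \<union> pair_roots ?X")
proof (intro equalityI subsetI)
  fix r assume r: "r \<in> orth_roots (coeff_vector m)"
  show "r \<in> A3_roots \<union> pair_roots ?X"
  proof (cases rule: orth_root_cases[OF nonzero sums r])
    case 1
    then show ?thesis by simp
  next
    case (2 a b sa sb)
    then have "of_int (m a) = (of_int (m b) :: real) \<or> of_int (m a) = - (of_int (m b) :: real)"
      by (intro sign_solutions_imp_equal_abs)
    then have "(a, b) \<in> equal_abs_pairs m"
      using 2 by (auto simp: equal_abs_pairs_def)
    then show ?thesis
      using 2 unfolding pair_roots_def by (intro UnI2 image_eqI[where x = "((a, b), (sa, sb))"]) auto
  qed
next
  fix r assume "r \<in> A3_roots \<union> pair_roots ?X"
  then consider "r \<in> A3_roots"
    | a b sa sb where "(a, b) \<in> equal_abs_pairs m" "(sa, sb) \<in> sign_solutions (m a) (m b)"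
        "r = pair_root a b sa sb"
    unfolding pair_roots_def by auto
  then show "r \<in> orth_roots (coeff_vector m)"
  proof cases
    case 1
    then show ?thesis using A3_roots_subset_orth_roots by blast
  next
    case (2 a b sa sb)
    then have "4 \<le> a" "a < b" "b \<le> 8" "sa \<in> {1, -1}" "sb \<in> {1, -1}"
      and "of_int (m a) * sa + of_int (m b) * sb = 0"
      by (auto simp: equal_abs_pairs_def sign_solutions_def)
    then show ?thesis
      using 2 by (simp add: orth_roots_def pair_root_in_E8_roots inner8_pair_root coeff_vector_def)
  qed
qed

lemma card_orth_roots:
  assumes "\<forall>j\<in>{4..8}. m j \<noteq> 0" "signed_sums_nonzero m"
  shows "card (orth_roots (coeff_vector m)) = 12 + 2 * card (equal_abs_pairs m)"
proof -
  define X where "X = Sigma (equal_abs_pairs m) (\<lambda>(a, b). sign_solutions (m a) (m b))"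
  have X_sub: "X \<subseteq> {(a, b). a < b} \<times> ({1, -1} \<times> {1, -1})"
    by (auto simp: X_def equal_abs_pairs_def sign_solutions_def)
  have "card X = (\<Sum>(a, b)\<in>equal_abs_pairs m. card (sign_solutions (m a) (m b)))"
    unfolding X_def using finite_equal_abs_pairs
    by (simp add: finite_sign_solutions split_def)
  also have "\<dots> = (\<Sum>p\<in>equal_abs_pairs m. 2)"
    using assms(1) by (intro sum.cong) (auto simp: equal_abs_pairs_def card_sign_solutions)
  finally have card_X: "card X = 2 * card (equal_abs_pairs m)" by simp
  have "r \<notin> A3_roots" if "r \<in> pair_roots X" for r
  proof -
    obtain a b sa sb where "(a, b) \<in> equal_abs_pairs m" "(sa, sb) \<in> sign_solutions (m a) (m b)"
      "r = pair_root a b sa sb"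
      using \<open>r \<in> pair_roots X\<close> by (auto simp: X_def pair_roots_def)
    then have "a \<in> {4..8}" "r a \<noteq> 0"
      by (auto simp: equal_abs_pairs_def sign_solutions_def pair_root_def)
    then show ?thesis by (auto simp: A3_roots_def)
  qed
  then have "A3_roots \<inter> pair_roots X = {}" by blast
  moreover have "finite A3_roots" using card_A3_roots by (intro card_ge_0_finite) simp
  moreover have "finite (pair_roots X)"
    unfolding X_def pair_roots_def using finite_equal_abs_pairs
    by (simp add: finite_sign_solutions split_def)
  ultimately show ?thesis
    using orth_roots_eq[OF assms] card_A3_roots card_pair_roots[OF X_sub] card_X
    by (simp add: X_def card_Un_disjoint)
qed

lemma nonzero_if_orth_roots_subset_A3_roots:
  assumes "orth_roots (coeff_vector m) \<subseteq> A3_roots" "j \<in> {4..8}"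
  shows "m j \<noteq> 0"
proof
  assume "m j = 0"
  then have "pair_root 1 j 1 1 \<in> orth_roots (coeff_vector m)"
    using assms(2) by (simp add: orth_roots_def pair_root_in_E8_roots inner8_pair_root coeff_vector_def)
  moreover have "pair_root 1 j 1 1 \<notin> A3_roots"
    using assms(2) by (auto simp: A3_roots_def pair_root_def)
  ultimately show False using assms(1) by blast
qed

lemma signed_sums_nonzero_if_orth_roots_subset_A3_roots:
  assumes "orth_roots (coeff_vector m) \<subseteq> A3_roots"
  shows "signed_sums_nonzero m"
  unfolding signed_sums_nonzero_def
proof (intro allI impI notI)
  fix s :: "nat \<Rightarrow> int"
  assume s: "\<forall>i\<in>{4..8}. s i = 1 \<or> s i = -1" and vanishing: "(\<Sum>i=4..8. s i * m i) = 0"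
  obtain w where w: "w \<in> E8_roots" "\<forall>i\<in>{4..8}. w i = of_int (s i) / 2"
    using exists_half_root[OF s] .
  have "w \<in> orth_roots (coeff_vector m)"
    using w(1) inner8_coeff_vector_half[OF w(2), of m] vanishing by (simp add: orth_roots_def)
  moreover have "w 4 \<noteq> 0"
    using w(2)[rule_format, of 4] s[rule_format, of 4] by auto
  moreover have "w \<notin> A3_roots"
    using \<open>w 4 \<noteq> 0\<close> by (auto simp: A3_roots_def)
  ultimately show False using assms by blast
qed

theorem proposition7p9:
  fixes m :: "nat \<Rightarrow> int"
  assumes "even (\<Sum>i=4..8. m i)"
  defines "l \<equiv> (\<lambda>i. if i \<in> {4..8} then real_of_int (m i) else 0)"
  shows "(card {r \<in> E8_roots. inner8 l r = 0} = 12 \<longleftrightarrow>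
           (\<forall>j\<in>{4..8}. m j \<noteq> 0)
         \<and> (\<forall>i\<in>{4..8}. \<forall>j\<in>{4..8}. i < j \<longrightarrow> m i \<noteq> m j \<and> m i \<noteq> - m j)
         \<and> (\<forall>s::nat \<Rightarrow> int. (\<forall>i\<in>{4..8}. s i = 1 \<or> s i = -1) \<longrightarrow> (\<Sum>i=4..8. s i * m i) \<noteq> 0))
       \<and> (((\<forall>j\<in>{4..8}. m j \<noteq> 0)
         \<and> (\<forall>s::nat \<Rightarrow> int. (\<forall>i\<in>{4..8}. s i = 1 \<or> s i = -1) \<longrightarrow> (\<Sum>i=4..8. s i * m i) \<noteq> 0)
         \<and> card {(i, j). 4 \<le> i \<and> i < j \<and> j \<le> (8::nat) \<and> (m i = m j \<or> m i = - m j)} = 1)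
         \<longrightarrow> card {r \<in> E8_roots. inner8 l r = 0} = 14)"
proof -
  \<comment> \<open>the parity hypothesis only ensures l \<in> E8; the count does not need it\<close>
  have orth: "{r \<in> E8_roots. inner8 l r = 0} = orth_roots (coeff_vector m)"
    by (simp add: l_def coeff_vector_def orth_roots_def)
  have no_pairs: "(\<forall>i\<in>{4..8}. \<forall>j\<in>{4..8}. i < j \<longrightarrow> m i \<noteq> m j \<and> m i \<noteq> - m j)
      \<longleftrightarrow> equal_abs_pairs m = {}"
    by (auto simp: equal_abs_pairs_def)
  have necessary: "(\<forall>j\<in>{4..8}. m j \<noteq> 0) \<and> signed_sums_nonzero m"
    if "card (orth_roots (coeff_vector m)) = 12"
    using that nonzero_if_orth_roots_subset_A3_roots signed_sums_nonzero_if_orth_roots_subset_A3_roots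
    by (simp add: card_orth_roots_eq_12_iff)
  show ?thesis
    unfolding orth no_pairs signed_sums_nonzero_def[symmetric] equal_abs_pairs_def[symmetric]
    using necessary card_orth_roots finite_equal_abs_pairs by (auto simp: card_eq_0_iff)
qed

end
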